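(* Let $n\ge1$, $k\in\{1,\dots,n\}$, scores $s_1,\dots,s_n\in\mathbb{R}$ not all equal, $p=\frac{n-k}{n}+\frac{1}{2n}$, $f_i(x)=\rho_p(s_i-x)$ and $f=\sum_{i=1}^n f_i$. Let $\tilde f_h=\sum_{i=1}^n\tilde f_i^h$ be a convex smooth approximation of $f$ with smoothing parameter $h$ satisfying the Standing Assumption below (with constants $L_h,M_h,U_h$), and let $\theta_k^h$ be a minimizer of $\tilde f_h$ over $\mathbb{R}$. If $U_h\le \frac{g_m\Delta}{8}$ and $x\in\mathbb{R}$ satisfies $\tilde f_h(x)-\tilde f_h(\theta_k^h)<\frac{g_m\Delta}{4}$, then $|x-\theta_k|\le\frac{\Delta}{2}$.
   Context: The pinball loss is $\rho_p(x)=p\,x$ if $x\ge0$ and $\rho_p(x)=-(1-p)x$ if $x<0$. The scores sorted in descending order are $\theta_1\ge\cdots\ge\theta_n$; $\theta_k$ is the $k$-th largest score (the unique minimizer of $f$). $\overline{m}$ is the number of indices $j\le k$ with $\theta_j=\theta_k$, $\underline{m}$ is the number of indices $j>k$ with $\theta_j=\theta_k$, $g_m=\min\{\overline{m}-\frac12,\underline{m}+\frac12\}$, and $\Delta=\min\{|s_i-\theta_k|: s_i\ne\theta_k\}$. Standing Assumption: each $\tilde f_i^h:\mathbb{R}\to\mathbb{R}$ is convex and differentiable, $\tilde f_h=\sum_i\tilde f_i^h$ satisfies $|\tilde f_h(x)-\tilde f_h(y)|\le L_h|x-y|$ and $|\tilde f_h'(x)-\tilde f_h'(y)|\le M_h|x-y|$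 for all $x,y$, $|f(x)-\tilde f_h(x)|\le U_h$ for all $x$, and each $\tilde f_i^h$ satisfies $|(\tilde f_i^h)'(x)-(\tilde f_i^h)'(y)|\le\frac{M_h}{n}|x-y|$ for all $x,y$. *)

theory Defs
  imports "HOL-Analysis.Analysis"
begin

definition pinball :: "real \<Rightarrow> real \<Rightarrow> real" where
  "pinball p x = (if x \<ge> 0 then p * x else - (1 - p) * x)"

text \<open>Scores s_1..s_n sorted in descending order; sorted_desc s n j is theta_j (1-based, 1 \<le> j \<le> n).\<close>
definition sorted_desc :: "(nat \<Rightarrow> real) \<Rightarrow> nat \<Rightarrow> nat \<Rightarrow> real" where
  "sorted_desc s n j = rev (sort (map s [1..<n+1])) ! (j - 1)"

definition m_upper :: "(nat \<Rightarrow> real) \<Rightarrow> nat \<Rightarrow> nat \<Rightarrow> nat" where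
  "m_upper s n k = card {j \<in> {1..k}. sorted_desc s n j = sorted_desc s n k}"

definition m_lower :: "(nat \<Rightarrow> real) \<Rightarrow> nat \<Rightarrow> nat \<Rightarrow> nat" where
  "m_lower s n k = card {j \<in> {k+1..n}. sorted_desc s n j = sorted_desc s n k}"

definition gap_m :: "(nat \<Rightarrow> real) \<Rightarrow> nat \<Rightarrow> nat \<Rightarrow> real" where
  "gap_m s n k = min (real (m_upper s n k) - 1/2) (real (m_lower s n k) + 1/2)"

definition Delta :: "(nat \<Rightarrow> real) \<Rightarrow> nat \<Rightarrow> nat \<Rightarrow> real" where
  "Delta s n k = Min {\<bar>s i - sorted_desc s n k\<bar> | i. i \<in> {1..n} \<and> s i \<noteq> sorted_desc s n k}"

end

theory Submission
  imports Defs "HOL-Library.Multiset"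
begin

text \<open>Away from the scores, the quantile loss \<open>F y = (\<Sum>i. pinball p (s i - y))\<close> is piecewise
  linear. With \<open>n p = n - k + 1/2\<close>, its slope just right of \<open>\<theta>\<^sub>k\<close> is \<open>k - 1/2\<close> minus the number
  of scores above \<open>\<theta>\<^sub>k\<close>, and at least \<open>m_upper\<close> of the \<open>k\<close> largest scores equal \<open>\<theta>\<^sub>k\<close>;
  symmetrically on the left. Hence \<open>F y - F \<theta>\<^sub>k \<ge> g\<^sub>m \<bar>y - \<theta>\<^sub>k\<bar>\<close>. As \<open>F\<close> and its
  smooth approximation differ by at most \<open>U\<close>, a \<open>g\<^sub>m \<Delta>/4\<close>-optimal point of the approximation is
  strictly better than \<open>g\<^sub>m \<Delta>/2\<close>-optimal for \<open>F\<close>, so it lies within \<open>\<Delta>/2\<close> of \<open>\<theta>\<^sub>k\<close>.\<close>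

lemma card_nth_filter:
  "card {j \<in> {1..length xs}. P (xs ! (j - 1))} = length (filter P xs)"
proof -
  have "{j \<in> {1..length xs}. P (xs ! (j - 1))} = Suc ` {i. i < length xs \<and> P (xs ! i)}"
  proof (intro set_eqI iffI)
    fix j assume "j \<in> {j \<in> {1..length xs}. P (xs ! (j - 1))}"
    then show "j \<in> Suc ` {i. i < length xs \<and> P (xs ! i)}"
      by (intro image_eqI[of _ _ "j - 1"]) auto
  qed auto
  then show ?thesis
    by (simp add: card_image length_filter_conv_card)
qed

lemma card_sorted_desc_filter:
  "card {j \<in> {1..n}. P (sorted_desc s n j)} = card {i \<in> {1..n}. P (s i)}"
proof -
  define xs where "xs = map s [1..<n+1]"
  have "card {j \<in> {1..n}. P (sorted_desc s n j)} = length (filter P (rev (sort xs)))"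
    using card_nth_filter[where xs="rev (sort xs)"]
    by (simp add: sorted_desc_def xs_def del: upt_Suc)
  also have "\<dots> = length (filter P xs)"
    by (metis mset_filter mset_rev mset_sort size_mset)
  also have "\<dots> = card {j \<in> {1..n}. P (xs ! (j - 1))}"
    using card_nth_filter[where xs=xs] by (simp add: xs_def del: upt_Suc)
  also have "{j \<in> {1..n}. P (xs ! (j - 1))} = {i \<in> {1..n}. P (s i)}"
    by (auto simp: xs_def nth_map_upt simp del: upt_Suc)
  finally show ?thesis .
qed

lemma sorted_desc_antimono:
  assumes "1 \<le> i" "i \<le> j" "j \<le> n"
  shows "sorted_desc s n j \<le> sorted_desc s n i"
proof -
  let ?zs = "sort (map s [1..<n+1])"
  have "?zs ! (n - j) \<le> ?zs ! (n - i)"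
    by (rule sorted_nth_mono) (use assms in auto)
  then show ?thesis
    using assms by (simp add: sorted_desc_def rev_nth Suc_diff_le)
qed

lemma card_Un_disjoint_le:
  assumes "finite I" "A \<subseteq> I" "B \<subseteq> I" "A \<inter> B = {}"
  shows "card A + card B \<le> card I"
  by (metis assms card_Un_disjoint card_mono finite_subset le_sup_iff)

lemma card_greater_sorted_desc_le:
  assumes "k \<in> {1..n}"
  shows "card {i \<in> {1..n}. s i > sorted_desc s n k} + m_upper s n k \<le> k"
proof -
  let ?c = "sorted_desc s n k"
  have "{j \<in> {1..n}. sorted_desc s n j > ?c} \<subseteq> {1..k}"
  proof
    fix j assume "j \<in> {j \<in> {1..n}. sorted_desc s n j > ?c}"
    moreover have "sorted_desc s n j \<le> ?c" if "k \<le> j" "j \<le> n"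
      using sorted_desc_antimono that assms by auto
    ultimately show "j \<in> {1..k}"
      by force
  qed
  then have "card {j \<in> {1..n}. sorted_desc s n j > ?c} + m_upper s n k \<le> card {1..k}"
    unfolding m_upper_def by (intro card_Un_disjoint_le) auto
  then show ?thesis
    by (subst (asm) card_sorted_desc_filter) simp
qed

lemma card_less_sorted_desc_le:
  assumes "k \<in> {1..n}"
  shows "card {i \<in> {1..n}. s i < sorted_desc s n k} + m_lower s n k \<le> n - k"
proof -
  let ?c = "sorted_desc s n k"
  have "{j \<in> {1..n}. sorted_desc s n j < ?c} \<subseteq> {k+1..n}"
  proof
    fix j assume "j \<in> {j \<in> {1..n}. sorted_desc s n j < ?c}"
    moreover have "?c \<le> sorted_desc s n j" if "1 \<le> j" "j \<le> k"
      using sorted_desc_antimono that assms by auto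
    ultimately show "j \<in> {k+1..n}"
      by force
  qed
  then have "card {j \<in> {1..n}. sorted_desc s n j < ?c} + m_lower s n k \<le> card {k+1..n}"
    unfolding m_lower_def by (intro card_Un_disjoint_le) auto
  then show ?thesis
    by (subst (asm) card_sorted_desc_filter) simp
qed

lemma pinball_increment_right:
  assumes "0 \<le> p" "p \<le> 1" "c \<le> y"
  shows "pinball p (a - y) - pinball p (a - c) \<ge> ((1 - p) - of_bool (a > c)) * (y - c)"
  using assms unfolding pinball_def by (auto simp: algebra_simps mult_left_mono)

lemma pinball_increment_left:
  assumes "0 \<le> p" "p \<le> 1" "y \<le> c"
  shows "pinball p (a - y) - pinball p (a - c) \<ge> (p - of_bool (a < c)) * (c - y)"
  using assms unfolding pinball_def by (auto simp: algebra_simps mult_left_mono)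

lemma pinball_sum_increment_right:
  fixes s :: "'a \<Rightarrow> real"
  assumes "finite I" "0 \<le> p" "p \<le> 1" "c \<le> y"
  shows "(\<Sum>i\<in>I. pinball p (s i - y)) - (\<Sum>i\<in>I. pinball p (s i - c))
           \<ge> ((1 - p) * card I - card {i \<in> I. s i > c}) * (y - c)"
proof -
  have "((1 - p) * card I - card {i \<in> I. s i > c}) * (y - c)
          = (\<Sum>i\<in>I. ((1 - p) - of_bool (s i > c)) * (y - c))"
    using assms(1) by (simp add: sum_distrib_right[symmetric] sum_subtractf Collect_conj_eq)
  also have "\<dots> \<le> (\<Sum>i\<in>I. pinball p (s i - y) - pinball p (s i - c))"
    by (intro sum_mono pinball_increment_right) (use assms in auto)
  finally show ?thesis
    by (simp add: sum_subtractf)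
qed

lemma pinball_sum_increment_left:
  fixes s :: "'a \<Rightarrow> real"
  assumes "finite I" "0 \<le> p" "p \<le> 1" "y \<le> c"
  shows "(\<Sum>i\<in>I. pinball p (s i - y)) - (\<Sum>i\<in>I. pinball p (s i - c))
           \<ge> (p * card I - card {i \<in> I. s i < c}) * (c - y)"
proof -
  have "(p * card I - card {i \<in> I. s i < c}) * (c - y)
          = (\<Sum>i\<in>I. (p - of_bool (s i < c)) * (c - y))"
    using assms(1) by (simp add: sum_distrib_right[symmetric] sum_subtractf Collect_conj_eq)
  also have "\<dots> \<le> (\<Sum>i\<in>I. pinball p (s i - y) - pinball p (s i - c))"
    by (intro sum_mono pinball_increment_left) (use assms in auto)
  finally show ?thesis
    by (simp add: sum_subtractf)
qed

lemma quantile_loss_sharp_minimum: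
  assumes "k \<in> {1..n}"
  defines "p \<equiv> (real n - real k) / real n + 1 / (2 * real n)"
  shows "(\<Sum>i=1..n. pinball p (s i - y)) - (\<Sum>i=1..n. pinball p (s i - sorted_desc s n k))
           \<ge> gap_m s n k * \<bar>y - sorted_desc s n k\<bar>"
proof -
  let ?c = "sorted_desc s n k"
  have np: "real n * p = real n - real k + 1/2"
    using assms by (simp add: p_def field_simps)
  have "p = (real n - real k + 1/2) / real n"
    using np assms by (simp add: field_simps)
  then have p01: "0 \<le> p" "p \<le> 1"
    using assms by (auto simp: divide_le_eq_1)
  show ?thesis
  proof (cases "?c \<le> y")
    case True
    have "gap_m s n k \<le> (1 - p) * n - card {i \<in> {1..n}. s i > ?c}"
    proof -
      have "(1 - p) * n = real k - 1/2"
        using np by (simp add: algebra_simps)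
      moreover have "real (card {i \<in> {1..n}. s i > ?c}) + m_upper s n k \<le> k"
        using card_greater_sorted_desc_le[OF assms(1), of s] by linarith
      ultimately show ?thesis
        unfolding gap_m_def by linarith
    qed
    then have "gap_m s n k * (y - ?c)
                 \<le> ((1 - p) * card {1..n} - card {i \<in> {1..n}. s i > ?c}) * (y - ?c)"
      using True by (intro mult_right_mono) auto
    also have "\<dots> \<le> (\<Sum>i=1..n. pinball p (s i - y)) - (\<Sum>i=1..n. pinball p (s i - ?c))"
      by (rule pinball_sum_increment_right) (use True p01 in auto)
    finally show ?thesis
      using True by simp
  next
    case False
    have "gap_m s n k \<le> p * n - card {i \<in> {1..n}. s i < ?c}"
    proof -
      have "real (card {i \<in> {1..n}. s i < ?c}) + m_lower s n k \<le> real n - real k"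
        using card_less_sorted_desc_le[OF assms(1), of s] assms
        by (metis atLeastAtMost_iff of_nat_add of_nat_diff of_nat_mono)
      then show ?thesis
        using np unfolding gap_m_def by (simp add: mult.commute)
    qed
    then have "gap_m s n k * (?c - y)
                 \<le> (p * card {1..n} - card {i \<in> {1..n}. s i < ?c}) * (?c - y)"
      using False by (intro mult_right_mono) auto
    also have "\<dots> \<le> (\<Sum>i=1..n. pinball p (s i - y)) - (\<Sum>i=1..n. pinball p (s i - ?c))"
      by (rule pinball_sum_increment_left) (use False p01 in auto)
    finally show ?thesis
      using False by simp
  qed
qed

lemma gap_m_ge_half:
  assumes "k \<in> {1..n}"
  shows "gap_m s n k \<ge> 1/2"
proof -
  have "m_upper s n k > 0"
    unfolding m_upper_def by (rule card_gt_0_iff[THEN iffD2]) (use assms in auto)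
  then show ?thesis
    by (simp add: gap_m_def)
qed

lemma near_optimal_point_of_perturbed_sharp_minimum:
  fixes F G :: "real \<Rightarrow> real"
  assumes sharp: "\<And>y. F y - F c \<ge> g * \<bar>y - c\<bar>" and "g > 0"
    and perturb: "\<And>y. \<bar>F y - G y\<bar> \<le> U" and "U \<le> g * D / 8"
    and minimizer: "\<And>y. G \<theta> \<le> G y"
    and near_optimal: "G x - G \<theta> < g * D / 4"
  shows "\<bar>x - c\<bar> < D / 2"
proof -
  have "g * \<bar>x - c\<bar> \<le> F x - F c"
    by (rule sharp)
  also have "\<dots> \<le> (G x + U) - (G c - U)"
    using perturb[of x] perturb[of c] by linarith
  also have "\<dots> < g * (D / 2)"
    using minimizer[of c] near_optimal \<open>U \<le> g * D / 8\<close> by linarith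
  finally show ?thesis
    using \<open>g > 0\<close> by simp
qed

theorem theorem1:
  fixes n k :: nat and s :: "nat \<Rightarrow> real"
    and ft :: "nat \<Rightarrow> real \<Rightarrow> real"
    and L M U theta_h x :: real
  assumes n_pos: "n \<ge> 1"
    and k_range: "k \<in> {1..n}"
    and not_all_equal: "\<exists>i\<in>{1..n}. \<exists>j\<in>{1..n}. s i \<noteq> s j"
    and convex: "\<And>i. i \<in> {1..n} \<Longrightarrow> convex_on UNIV (ft i)"
    and differentiable: "\<And>i y. i \<in> {1..n} \<Longrightarrow> ft i differentiable (at y)"
    and lipschitz: "\<And>y z. \<bar>(\<Sum>i=1..n. ft i y) - (\<Sum>i=1..n. ft i z)\<bar> \<le> L * \<bar>y - z\<bar>"
    and smooth: "\<And>y z. \<bar>deriv (\<lambda>t. \<Sum>i=1..n. ft i t) y - deriv (\<lambda>t. \<Sum>i=1..n. ft i t) z\<bar>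
                        \<le> M * \<bar>y - z\<bar>"
    and approx: "\<And>y. \<bar>(\<Sum>i=1..n. pinball ((real n - real k) / real n + 1 / (2 * real n)) (s i - y))
                        - (\<Sum>i=1..n. ft i y)\<bar> \<le> U"
    and smooth_i: "\<And>i y z. i \<in> {1..n} \<Longrightarrow>
                        \<bar>deriv (ft i) y - deriv (ft i) z\<bar> \<le> M / real n * \<bar>y - z\<bar>"
    and minimizer: "\<And>y. (\<Sum>i=1..n. ft i theta_h) \<le> (\<Sum>i=1..n. ft i y)"
    and U_small: "U \<le> gap_m s n k * Delta s n k / 8"
    and x_good: "(\<Sum>i=1..n. ft i x) - (\<Sum>i=1..n. ft i theta_h) < gap_m s n k * Delta s n k / 4"
  shows "\<bar>x - sorted_desc s n k\<bar> \<le> Delta s n k / 2"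
proof -
  have "\<bar>x - sorted_desc s n k\<bar> < Delta s n k / 2"
  proof (rule near_optimal_point_of_perturbed_sharp_minimum)
    show "gap_m s n k > 0"
      using gap_m_ge_half[OF k_range, of s] by linarith
  qed (use quantile_loss_sharp_minimum[OF k_range] approx minimizer U_small x_good in auto)
  then show ?thesis
    by simp
qed

end
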